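(* Let $m>n$ be coprime positive integers. For $(\lambda,k)\in X\times\mathbb Z$ define $x(\lambda,k)=\nu^{-k}x(\lambda)+k\,\mathbf m\in\mathbb Z^{n|m}$. Then $x(\overline\lambda,k+1)=x(\lambda,k)$ whenever $\lambda_1=m$, so $x$ induces a map $[X\times\mathbb Z]\to\mathbb Z^{n|m}$; this induced map is injective and its image is exactly the $\mathfrak T_{iso}$-orbit $\mathcal O$ of $\Lambda_0$.
   Context: $X$ is the set of partitions $\lambda=(\lambda_1\ge\dots\ge\lambda_n\ge0)$ with $\lambda_1\le m$; $\lambda'_j=\#\{i:\lambda_i\ge j\}$ for $j\in[m]$. For $\lambda\in X$ with $\lambda_1=m$ put $\overline\lambda=(\lambda_2,\dots,\lambda_n,0)$. Let $\sim$ be the smallest equivalence relation on $X\times\mathbb Z$ with $(\lambda,k)\sim(\overline\lambda,k+1)$ whenever $\lambda_1=m$, and $[X\times\mathbb Z]$ the set of equivalence classes. Elements of $\mathbb Z^{n|m}$ are written $\Lambda=(a_1,\dots,a_n|b_1,\dots,b_m)$, identified with $\sum_i a_i\epsilon_i-\sum_j b_j\delta_j$. For $\lambda\in X$, $x(\lambda)=(a_1,\dots,a_n|b_1,\dots,b_m)$ with $a_i=m(n-i)+n\lambda_{n+1-i}$ and $b_j=n(j-1)+m\lambda'_j$. $\nu$ is the linear map with $\nu(a_1,\dots,a_n|b)=(a_n,a_1,\dots,a_{n-1}|b)$ (i.e. $\nu\epsilon_i=\epsilon_{i+1}$ indices mod $n$, $\nu\delta_j=\delta_j$), and $\mathbf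 m=(m,\dots,m|m,\dots,m)$. $\Lambda_0=x(\emptyset)=(m(n-1),m(n-2),\dots,m,0\,|\,0,n,2n,\dots,n(m-1))$. For $\alpha=\epsilon_i-\delta_j$ ($i\in[n],j\in[m]$) let $\Pi_\alpha=\{\Lambda: a_i=b_j\}$, $\Pi_{-\alpha}=\{\Lambda:a_i-b_j=n-m\}$, and let $\tau_\alpha:\Pi_\alpha\to\Pi_{-\alpha}$ be $\Lambda\mapsto\Lambda+n\epsilon_i-m\delta_j$ (add $n$ to $a_i$ and $m$ to $b_j$), with inverse $\tau_{-\alpha}$. The $\mathfrak T_{iso}$-orbit of $\Lambda_0$ is the set of all elements obtained from $\Lambda_0$ by finite sequences of maps $\tau_{\pm\alpha}$, each applied to an element of its domain $\Pi_{\pm\alpha}$. *)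

theory Defs
  imports Main
begin

text \<open>Partitions with at most n parts (padded with zeros to length exactly n),
  represented as lists lam = [lam_1, ..., lam_n], weakly decreasing, entries \<le> m.\<close>
definition partX :: "nat \<Rightarrow> nat \<Rightarrow> nat list set" where
  "partX n m = {lam. length lam = n \<and> sorted_wrt (\<ge>) lam \<and> (\<forall>x\<in>set lam. x \<le> m)}"

text \<open>lambda_i for i in [n] (1-indexed).\<close>
definition part_at :: "nat list \<Rightarrow> nat \<Rightarrow> nat" where
  "part_at lam i = lam ! (i - 1)"

definition conj_at :: "nat list \<Rightarrow> nat \<Rightarrow> nat" where
  "conj_at lam j = card {i \<in> {1..length lam}. part_at lam i \<ge> j}"

definition pbar :: "nat list \<Rightarrow> nat list" where
  "pbar lam = tl lam @ [0]"

definition gen_rel :: "nat \<Rightarrow> nat \<Rightarrow> nat list \<times> int \<Rightarrow> nat list \<times> int \<Rightarrow> bool" where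
  "gen_rel n m p q \<longleftrightarrow> fst p \<in> partX n m \<and> part_at (fst p) 1 = m \<and> q = (pbar (fst p), snd p + 1)"

definition simX :: "nat \<Rightarrow> nat \<Rightarrow> nat list \<times> int \<Rightarrow> nat list \<times> int \<Rightarrow> bool" where
  "simX n m = equivclp (gen_rel n m)"

text \<open>Elements of Z^{n|m}: pairs (a, b) with a = [a_1..a_n], b = [b_1..b_m].\<close>
type_synonym wt = "int list \<times> int list"

definition xmap :: "nat \<Rightarrow> nat \<Rightarrow> nat list \<Rightarrow> wt" where
  "xmap n m lam =
     (map (\<lambda>i. int (m * (n - i) + n * part_at lam (n + 1 - i))) [1..<n+1],
      map (\<lambda>j. int (n * (j - 1) + m * conj_at lam j)) [1..<m+1])"

definition nu :: "wt \<Rightarrow> wt" where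
  "nu L = (if fst L = [] then [] else last (fst L) # butlast (fst L), snd L)"

definition nu_inv :: "wt \<Rightarrow> wt" where
  "nu_inv L = (rotate1 (fst L), snd L)"

definition nu_pow :: "int \<Rightarrow> wt \<Rightarrow> wt" where
  "nu_pow j = (if j \<ge> 0 then nu ^^ nat j else nu_inv ^^ nat (- j))"

definition xk :: "nat \<Rightarrow> nat \<Rightarrow> nat list \<times> int \<Rightarrow> wt" where
  "xk n m p = (let L = nu_pow (- snd p) (xmap n m (fst p)) in
      (map (\<lambda>a. a + snd p * int m) (fst L), map (\<lambda>b. b + snd p * int m) (snd L)))"

definition Lambda0 :: "nat \<Rightarrow> nat \<Rightarrow> wt" where
  "Lambda0 n m = xmap n m (replicate n 0)"

text \<open>For alpha = eps_i - delta_j (1-indexed i \<in> [n], j \<in> [m]).\<close>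
definition Pi_pos :: "nat \<Rightarrow> nat \<Rightarrow> wt \<Rightarrow> bool" where
  "Pi_pos i j L \<longleftrightarrow> fst L ! (i - 1) = snd L ! (j - 1)"

definition Pi_neg :: "nat \<Rightarrow> nat \<Rightarrow> nat \<Rightarrow> nat \<Rightarrow> wt \<Rightarrow> bool" where
  "Pi_neg n m i j L \<longleftrightarrow> fst L ! (i - 1) - snd L ! (j - 1) = int n - int m"

definition tau_pos :: "nat \<Rightarrow> nat \<Rightarrow> nat \<Rightarrow> nat \<Rightarrow> wt \<Rightarrow> wt" where
  "tau_pos n m i j L = ((fst L)[i - 1 := fst L ! (i - 1) + int n], (snd L)[j - 1 := snd L ! (j - 1) + int m])"

definition tau_neg :: "nat \<Rightarrow> nat \<Rightarrow> nat \<Rightarrow> nat \<Rightarrow> wt \<Rightarrow> wt" where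
  "tau_neg n m i j L = ((fst L)[i - 1 := fst L ! (i - 1) - int n], (snd L)[j - 1 := snd L ! (j - 1) - int m])"

inductive_set orbit :: "nat \<Rightarrow> nat \<Rightarrow> wt set" for n m where
  base: "Lambda0 n m \<in> orbit n m"
| pos: "\<lbrakk>L \<in> orbit n m; i \<in> {1..n}; j \<in> {1..m}; Pi_pos i j L\<rbrakk> \<Longrightarrow> tau_pos n m i j L \<in> orbit n m"
| neg: "\<lbrakk>L \<in> orbit n m; i \<in> {1..n}; j \<in> {1..m}; Pi_neg n m i j L\<rbrakk> \<Longrightarrow> tau_neg n m i j L \<in> orbit n m"

end

theory Submission
  imports Defs
begin

text \<open>
  Write \<open>r = row_index n k i\<close>. Then \<open>x(\<lambda>,k)\<close> has the coordinates
  \<open>a\<^sub>i = m(r-1) + n\<lambda>\<^sub>r + km\<close> and \<open>b\<^sub>j = n(j-1) + m\<lambda>'\<^sub>j + km\<close>, so the walls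
  \<open>a\<^sub>i = b\<^sub>j\<close> and \<open>a\<^sub>i - b\<^sub>j = n - m\<close> read \<open>m(r-1-\<lambda>'\<^sub>j) = n(j-1-\<lambda>\<^sub>r)\<close> and
  \<open>m(\<lambda>'\<^sub>j-r) = n(\<lambda>\<^sub>r-j)\<close>. By coprimality the factor of m is a multiple of n in
  \<open>[-n,n)\<close>, hence 0 or \<open>-n\<close>. The value 0 says that (r,j) is an addable, resp. removable,
  box of \<lambda>, and \<open>\<tau>\<^sub>\<plusminus>\<^sub>\<alpha>\<close> adds, resp. removes, exactly that box; the value \<open>-n\<close> becomes
  the value 0 for the neighbouring representative \<open>(pbar \<lambda>,k+1)\<close>, resp. \<open>(\<mu>,k-1)\<close> with
  \<open>pbar \<mu> = \<lambda>\<close>. Hence the orbit stays in the image of x. Conversely, removing boxes one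
  at a time joins \<open>x(\<lambda>,k)\<close> to \<open>x(\<emptyset>,k)\<close> inside the orbit, and the levels are joined
  through \<open>x(\<emptyset>,k+1) = x((m,0,\<dots>,0),k)\<close> and \<open>x((m,\<dots>,m),k-1) = x((m,\<dots>,m,0),k)\<close>.
  For injectivity, equal levels are separated by the \<open>a\<close>-coordinates, and if
  \<open>x(\<lambda>,k) = x(\<mu>,l)\<close> with \<open>k < l\<close> then \<open>b\<^sub>m\<close> forces \<open>\<lambda>\<^sub>1 = m\<close>, so that \<open>(\<lambda>,k)\<close>
  may be replaced by \<open>(pbar \<lambda>,k+1)\<close>.
\<close>

section \<open>Powers of \<open>\<nu>\<close> as rotations\<close>

lemma rotate_cong_mod:
  assumes "int a mod int (length xs) = int b mod int (length xs)"
  shows "rotate a xs = rotate b xs"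
  using assms by (metis rotate_conv_mod zmod_int of_nat_eq_iff)

lemma rotate_length_minus_1:
  "rotate (length xs - 1) xs = (if xs = [] then [] else last xs # butlast xs)"
proof (cases "xs = []")
  case False
  then have "rotate (length xs - 1) xs = rotate (length (butlast xs)) (butlast xs @ [last xs])"
    by simp
  then show ?thesis using False by (simp only: rotate_append) simp
qed simp

lemma fst_nu: "fst (nu L) = rotate (length (fst L) - 1) (fst L)"
  unfolding nu_def rotate_length_minus_1 by simp

lemma fst_funpow_nu: "fst ((nu ^^ t) L) = rotate (t * (length (fst L) - 1)) (fst L)"
  by (induction t) (simp_all add: fst_nu rotate_rotate)

lemma fst_funpow_nu_inv: "fst ((nu_inv ^^ t) L) = rotate t (fst L)"
  by (induction t) (simp_all add: nu_inv_def rotate_rotate)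

lemma snd_nu_pow: "snd (nu_pow j L) = snd L"
proof -
  have "snd ((nu ^^ t) L) = snd L" "snd ((nu_inv ^^ t) L) = snd L" for t
    by (induction t) (simp_all add: nu_def nu_inv_def)
  then show ?thesis by (simp add: nu_pow_def)
qed

lemma fst_nu_pow: "fst (nu_pow j L) = rotate (nat (- j mod int (length (fst L)))) (fst L)"
proof (cases "fst L = []")
  case True
  then show ?thesis by (simp add: nu_pow_def fst_funpow_nu fst_funpow_nu_inv)
next
  case False
  define l where "l = int (length (fst L))"
  have "0 < l" using False by (simp add: l_def)
  then have target: "int (nat (- j mod l)) mod l = - j mod l" by simp
  show ?thesis
  proof (cases "j \<ge> 0")
    case True
    then have "int (nat j * (length (fst L) - 1)) = j * l - j"
      using False by (simp add: l_def algebra_simps Suc_le_eq)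
    then have "int (nat j * (length (fst L) - 1)) mod l = - j mod l"
      by (simp add: mod_diff_left_eq[of "j * l", symmetric])
    then show ?thesis
      using True target by (simp add: nu_pow_def fst_funpow_nu rotate_cong_mod l_def)
  next
    case False
    then show ?thesis
      using target by (simp add: nu_pow_def fst_funpow_nu_inv rotate_cong_mod l_def)
  qed
qed

section \<open>Partitions\<close>

lemma partX_length: "lam \<in> partX n m \<Longrightarrow> length lam = n"
  by (simp add: partX_def)

lemma partX_antimono:
  assumes "lam \<in> partX n m" "1 \<le> i" "i \<le> i'" "i' \<le> n"
  shows "part_at lam i' \<le> part_at lam i"
proof (cases "i = i'")
  case False
  then have "i - 1 < i' - 1" "i' - 1 < length lam" using assms partX_length by fastforce+
  then show ?thesis using assms(1) unfolding partX_def part_at_def sorted_wrt_iff_nth_less by blast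
qed simp

lemma partX_le:
  assumes "lam \<in> partX n m" "i \<in> {1..n}"
  shows "part_at lam i \<le> m"
proof -
  have "lam ! (i - 1) \<in> set lam" using assms by (auto simp: partX_def)
  then show ?thesis using assms(1) by (auto simp: partX_def part_at_def)
qed

lemma partXI:
  assumes "length lam = n"
    and "\<And>i i'. 1 \<le> i \<Longrightarrow> i < i' \<Longrightarrow> i' \<le> n \<Longrightarrow> part_at lam i' \<le> part_at lam i"
    and "\<And>i. i \<in> {1..n} \<Longrightarrow> part_at lam i \<le> m"
  shows "lam \<in> partX n m"
proof -
  have "sorted_wrt (\<ge>) lam"
    unfolding sorted_wrt_iff_nth_less
    using assms(1) assms(2)[of "Suc i" "Suc j" for i j] by (simp add: part_at_def)
  moreover have "\<forall>x\<in>set lam. x \<le> m"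
    using assms(1) assms(3)[of "Suc i" for i] by (auto simp: in_set_conv_nth part_at_def Suc_le_eq)
  ultimately show ?thesis using assms(1) by (simp add: partX_def)
qed

lemma part_at_list_update:
  assumes "length lam = n" "r \<in> {1..n}" "i \<in> {1..n}"
  shows "part_at (lam[r - 1 := v]) i = (if i = r then v else part_at lam i)"
  using assms by (auto simp: part_at_def nth_list_update)

lemma list_update_partX:
  assumes "lam \<in> partX n m" "r \<in> {1..n}" "v \<le> m"
    and "\<And>i. 1 \<le> i \<Longrightarrow> i < r \<Longrightarrow> v \<le> part_at lam i"
    and "\<And>i. r < i \<Longrightarrow> i \<le> n \<Longrightarrow> part_at lam i \<le> v"
  shows "lam[r - 1 := v] \<in> partX n m"
proof (rule partXI)
  note upd = part_at_list_update[OF partX_length[OF assms(1)] assms(2)]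
  show "length (lam[r - 1 := v]) = n" using partX_length[OF assms(1)] by simp
  show "part_at (lam[r - 1 := v]) i' \<le> part_at (lam[r - 1 := v]) i"
    if "1 \<le> i" "i < i'" "i' \<le> n" for i i'
    using that upd[of i] upd[of i'] assms(4)[of i] assms(5)[of i'] partX_antimono[OF assms(1), of i i']
    by auto
  show "part_at (lam[r - 1 := v]) i \<le> m" if "i \<in> {1..n}" for i
    using that upd[of i] partX_le[OF assms(1)] assms(3) by auto
qed

lemma conj_at_eqI:
  assumes "length lam = n" "p \<le> n" "\<And>i. i \<in> {1..n} \<Longrightarrow> j \<le> part_at lam i \<longleftrightarrow> i \<le> p"
  shows "conj_at lam j = p"
proof -
  have "{i \<in> {1..length lam}. j \<le> part_at lam i} = {1..p}" using assms by auto
  then show ?thesis by (simp add: conj_at_def)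
qed

lemma conj_at_le:
  assumes "lam \<in> partX n m"
  shows "conj_at lam j \<le> n"
  unfolding conj_at_def partX_length[OF assms]
  by (rule order_trans[OF card_mono[of "{1..n}"]]) auto

lemma le_part_at_iff_le_conj_at:
  assumes "lam \<in> partX n m" "i \<in> {1..n}"
  shows "j \<le> part_at lam i \<longleftrightarrow> i \<le> conj_at lam j"
proof -
  define S where "S = {i \<in> {1..n}. j \<le> part_at lam i}"
  have conj: "conj_at lam j = card S" by (simp add: conj_at_def S_def partX_length[OF assms(1)])
  show ?thesis
  proof
    assume "j \<le> part_at lam i"
    then have "{1..i} \<subseteq> S" using assms partX_antimono[OF assms(1)] by (fastforce simp: S_def)
    then show "i \<le> conj_at lam j" using card_mono[of S "{1..i}"] by (simp add: conj S_def)
  next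
    assume i: "i \<le> conj_at lam j"
    show "j \<le> part_at lam i"
    proof (rule ccontr)
      assume "\<not> j \<le> part_at lam i"
      have "S \<subseteq> {1..<i}"
      proof
        fix i' assume "i' \<in> S"
        then have "1 \<le> i'" "i' \<le> n" "j \<le> part_at lam i'" by (auto simp: S_def)
        then show "i' \<in> {1..<i}"
          using \<open>\<not> j \<le> part_at lam i\<close> partX_antimono[OF assms(1), of i i'] assms(2)
          by (auto simp: not_less[symmetric])
      qed
      then have "card S < i" using card_mono[of "{1..<i}" S] assms(2) by auto
      then show False using i conj by simp
    qed
  qed
qed

lemma conj_at_add_box:
  assumes "length lam = n" "r \<in> {1..n}"
  shows "conj_at (lam[r - 1 := Suc (part_at lam r)]) j
           = conj_at lam j + (if j = Suc (part_at lam r) then 1 else 0)"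
proof -
  let ?S = "{i \<in> {1..n}. j \<le> part_at lam i}"
  let ?S' = "{i \<in> {1..n}. j \<le> part_at (lam[r - 1 := Suc (part_at lam r)]) i}"
  note upd = part_at_list_update[OF assms]
  have "?S' = (if j = Suc (part_at lam r) then insert r ?S else ?S)"
    and "r \<notin> ?S \<or> j \<noteq> Suc (part_at lam r)"
    using assms upd by (auto split: if_splits)
  then show ?thesis using assms(1) by (simp add: conj_at_def)
qed

lemma add_box_partX:
  assumes "lam \<in> partX n m" "r \<in> {1..n}" "j \<le> m"
    and "part_at lam r + 1 = j" "conj_at lam j + 1 = r"
  shows "lam[r - 1 := j] \<in> partX n m"
proof (rule list_update_partX[OF assms(1-3)])
  show "j \<le> part_at lam i" if "1 \<le> i" "i < r" for i
    using le_part_at_iff_le_conj_at[OF assms(1), of i j] that assms(2,5) by auto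
  show "part_at lam i \<le> j" if "r < i" "i \<le> n" for i
    using partX_antimono[OF assms(1), of r i] that assms(2,4) by auto
qed

lemma remove_box_partX:
  assumes "lam \<in> partX n m" "r \<in> {1..n}" "part_at lam r = j" "conj_at lam j = r"
  shows "lam[r - 1 := j - 1] \<in> partX n m"
proof (rule list_update_partX[OF assms(1,2)])
  show "j - 1 \<le> m" using partX_le[OF assms(1,2)] assms(3) by simp
  show "j - 1 \<le> part_at lam i" if "1 \<le> i" "i < r" for i
    using partX_antimono[OF assms(1), of i r] that assms(2,3) by auto
  show "part_at lam i \<le> j - 1" if "r < i" "i \<le> n" for i
    using le_part_at_iff_le_conj_at[OF assms(1), of i j] that assms(4) by auto
qed

lemma empty_partX: "replicate n 0 \<in> partX n m"
  by (simp add: partX_def sorted_wrt_iff_nth_less)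

lemma first_row_pos:
  assumes "lam \<in> partX n m" "lam \<noteq> replicate n 0"
  shows "1 \<le> part_at lam 1"
proof (rule ccontr)
  assume first_row: "\<not> 1 \<le> part_at lam 1"
  have "x = 0" if x: "x \<in> set lam" for x
  proof -
    obtain p where "p < n" "x = lam ! p"
      using x partX_length[OF assms(1)] by (auto simp: in_set_conv_nth)
    then show "x = 0"
      using first_row partX_antimono[OF assms(1), of 1 "Suc p"] by (simp add: part_at_def)
  qed
  then show False using assms replicate_length_same[of lam 0] partX_length[OF assms(1)] by auto
qed

lemma last_box_of_first_row:
  assumes "lam \<in> partX n m" "0 < n"
  shows "conj_at lam (part_at lam 1) \<in> {1..n}"
    and "part_at lam (conj_at lam (part_at lam 1)) = part_at lam 1"
proof -
  have one: "1 \<in> {1..n}" using assms(2) by simp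
  show r: "conj_at lam (part_at lam 1) \<in> {1..n}"
    using le_part_at_iff_le_conj_at[OF assms(1) one, of "part_at lam 1"]
      conj_at_le[OF assms(1), of "part_at lam 1"] by simp
  show "part_at lam (conj_at lam (part_at lam 1)) = part_at lam 1"
    using le_part_at_iff_le_conj_at[OF assms(1) r] partX_antimono[OF assms(1), of 1] r
    by (simp add: le_antisym)
qed

lemma part_at_pbar:
  assumes "length lam = n" "i \<in> {1..n}"
  shows "part_at (pbar lam) i = (if i < n then part_at lam (i + 1) else 0)"
  using assms by (auto simp: pbar_def part_at_def nth_append nth_tl)

lemma length_pbar: "length lam = n \<Longrightarrow> 0 < n \<Longrightarrow> length (pbar lam) = n"
  by (simp add: pbar_def)

lemma pbar_partX:
  assumes "lam \<in> partX n m" "0 < n"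
  shows "pbar lam \<in> partX n m"
proof (rule partXI)
  have len: "length lam = n" using partX_length[OF assms(1)] .
  show "length (pbar lam) = n" using length_pbar[OF len assms(2)] .
  show "part_at (pbar lam) i' \<le> part_at (pbar lam) i" if "1 \<le> i" "i < i'" "i' \<le> n" for i i'
    using that part_at_pbar[OF len] partX_antimono[OF assms(1), of "i + 1" "i' + 1"] by auto
  show "part_at (pbar lam) i \<le> m" if "i \<in> {1..n}" for i
    using that part_at_pbar[OF len] partX_le[OF assms(1), of "i + 1"] by auto
qed

lemma conj_at_pbar:
  assumes "lam \<in> partX n m" "0 < n" "part_at lam 1 = m" "j \<in> {1..m}"
  shows "conj_at (pbar lam) j = conj_at lam j - 1" "1 \<le> conj_at lam j"
proof -
  have len: "length lam = n" using partX_length[OF assms(1)] .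
  show first_row: "1 \<le> conj_at lam j"
    using le_part_at_iff_le_conj_at[OF assms(1), of 1 j] assms by simp
  show "conj_at (pbar lam) j = conj_at lam j - 1"
  proof (rule conj_at_eqI)
    show "length (pbar lam) = n" using length_pbar[OF len assms(2)] .
    show "conj_at lam j - 1 \<le> n" using conj_at_le[OF assms(1), of j] by simp
    show "j \<le> part_at (pbar lam) i \<longleftrightarrow> i \<le> conj_at lam j - 1" if "i \<in> {1..n}" for i
      using that part_at_pbar[OF len] le_part_at_iff_le_conj_at[OF assms(1), of "i + 1" j]
        conj_at_le[OF assms(1), of j] assms(4) by auto
  qed
qed

lemma cons_butlast_partX:
  assumes "lam \<in> partX n m" "0 < n"
  shows "m # butlast lam \<in> partX n m"
  using assms by (auto simp: partX_def butlast_conv_take dest: in_set_takeD)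

lemma pbar_cons_butlast:
  assumes "length lam = n" "0 < n" "part_at lam n = 0"
  shows "pbar (m # butlast lam) = lam"
proof -
  have "last lam = 0" using assms by (auto simp: last_conv_nth part_at_def)
  then show ?thesis using assms(1,2) append_butlast_last_id[of lam] by (auto simp: pbar_def)
qed

section \<open>The reflections \<open>\<tau>\<^sub>\<plusminus>\<^sub>\<alpha>\<close>\<close>

lemma wt_eqI:
  assumes "length (fst L) = n" "length (fst L') = n" "length (snd L) = m" "length (snd L') = m"
    and "\<And>i. i \<in> {1..n} \<Longrightarrow> fst L ! (i - 1) = fst L' ! (i - 1)"
    and "\<And>j. j \<in> {1..m} \<Longrightarrow> snd L ! (j - 1) = snd L' ! (j - 1)"
  shows "L = L'"
proof -
  have "fst L = fst L'" "snd L = snd L'"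
    using assms(5)[of "Suc _"] assms(6)[of "Suc _"] assms(1-4) by (auto intro: nth_equalityI)
  then show ?thesis by (simp add: prod_eq_iff)
qed

lemma length_tau_pos:
  "length (fst (tau_pos n m i j L)) = length (fst L)"
  "length (snd (tau_pos n m i j L)) = length (snd L)"
  by (simp_all add: tau_pos_def)

lemma fst_tau_pos_nth:
  assumes "length (fst L) = n" "i \<in> {1..n}" "i' \<in> {1..n}"
  shows "fst (tau_pos n m i j L) ! (i' - 1) = fst L ! (i' - 1) + (if i' = i then int n else 0)"
  using assms by (auto simp: tau_pos_def nth_list_update)

lemma snd_tau_pos_nth:
  assumes "length (snd L) = m" "j \<in> {1..m}" "j' \<in> {1..m}"
  shows "snd (tau_pos n m i j L) ! (j' - 1) = snd L ! (j' - 1) + (if j' = j then int m else 0)"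
  using assms by (auto simp: tau_pos_def nth_list_update)

lemma tau_neg_tau_pos:
  assumes "i \<in> {1..length (fst L)}" "j \<in> {1..length (snd L)}"
  shows "tau_neg n m i j (tau_pos n m i j L) = L"
  using assms by (auto simp: tau_neg_def tau_pos_def prod_eq_iff)

lemma tau_pos_tau_neg:
  assumes "i \<in> {1..length (fst L)}" "j \<in> {1..length (snd L)}"
  shows "tau_pos n m i j (tau_neg n m i j L) = L"
  using assms by (auto simp: tau_neg_def tau_pos_def prod_eq_iff)

lemma Pi_pos_tau_neg:
  assumes "i \<in> {1..length (fst L)}" "j \<in> {1..length (snd L)}" "Pi_neg n m i j L"
  shows "Pi_pos i j (tau_neg n m i j L)"
  using assms by (auto simp: Pi_pos_def Pi_neg_def tau_neg_def)

lemma orbit_tau_neg_iff: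
  assumes "length (fst L) = n" "length (snd L) = m" "i \<in> {1..n}" "j \<in> {1..m}"
    and "Pi_neg n m i j L"
  shows "tau_neg n m i j L \<in> orbit n m \<longleftrightarrow> L \<in> orbit n m"
proof
  assume "tau_neg n m i j L \<in> orbit n m"
  from orbit.pos[OF this assms(3,4)] show "L \<in> orbit n m"
    using Pi_pos_tau_neg[of i L j n m] tau_pos_tau_neg[of i L j n m] assms by simp
qed (rule orbit.neg[OF _ assms(3-5)])

section \<open>The coordinates of \<open>x(\<lambda>,k)\<close>\<close>

text \<open>The row of \<lambda> read off by the \<open>i\<close>-th \<open>a\<close>-coordinate of \<open>x(\<lambda>,k)\<close>: \<open>\<nu>\<^sup>-\<^sup>k\<close> shifts
  positions cyclically by \<open>k\<close>, and position \<open>q\<close> (counted from 0) of \<open>x(\<lambda>)\<close> carries row \<open>n - q\<close>.\<close>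

definition row_index :: "nat \<Rightarrow> int \<Rightarrow> nat \<Rightarrow> nat" where
  "row_index n k i = n - nat ((int i + k - 1) mod int n)"

lemma row_index_mem:
  assumes "0 < n"
  shows "row_index n k i \<in> {1..n}"
proof -
  have "nat ((int i + k - 1) mod int n) < n" using assms by (simp add: nat_less_iff)
  then show ?thesis by (auto simp: row_index_def)
qed

lemma inj_on_row_index:
  assumes "0 < n"
  shows "inj_on (row_index n k) {1..n}"
proof
  fix i i' assume i: "i \<in> {1..n}" and i': "i' \<in> {1..n}"
    and eq: "row_index n k i = row_index n k i'"
  have "nat ((int x + k - 1) mod int n) < n" for x using assms by (simp add: nat_less_iff)
  then have "nat ((int i + k - 1) mod int n) = nat ((int i' + k - 1) mod int n)"
    using eq unfolding row_index_def by (metis diff_diff_cancel less_imp_le)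
  then have "(int i + k - 1) mod int n = (int i' + k - 1) mod int n"
    using assms by (subst (asm) eq_nat_nat_iff) auto
  then have "(int i + k - 1 - k) mod int n = (int i' + k - 1 - k) mod int n"
    by (metis mod_diff_left_eq)
  then show "i = i'" using i i' by simp
qed

lemma row_index_image:
  assumes "0 < n"
  shows "row_index n k ` {1..n} = {1..n}"
  using endo_inj_surj[OF _ _ inj_on_row_index[OF assms]] row_index_mem[OF assms] by blast

lemma row_index_succ:
  assumes "0 < n"
  shows "row_index n (k + 1) i = (if 2 \<le> row_index n k i then row_index n k i - 1 else n)"
proof -
  define p where "p = (int i + k - 1) mod int n"
  have p: "0 \<le> p" "p < int n" using assms by (auto simp: p_def)
  have "(int i + (k + 1) - 1) mod int n = (p + 1) mod int n"
    by (simp add: p_def mod_add_left_eq)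
  moreover have "(p + 1) mod int n = (if p + 1 < int n then p + 1 else 0)"
    using p by (cases "p + 1 = int n") auto
  ultimately show ?thesis
    using p by (auto simp: row_index_def p_def[symmetric])
qed

lemma length_xmap: "length (fst (xmap n m lam)) = n" "length (snd (xmap n m lam)) = m"
  by (simp_all add: xmap_def del: upt_Suc)

lemma fst_xmap_nth:
  "q < n \<Longrightarrow> fst (xmap n m lam) ! q = int (m * (n - Suc q) + n * part_at lam (n - q))"
  by (simp add: xmap_def del: upt_Suc)

lemma snd_xmap_nth:
  assumes "j \<in> {1..m}"
  shows "snd (xmap n m lam) ! (j - 1) = int n * (int j - 1) + int m * int (conj_at lam j)"
proof -
  have "j - 1 < m" "Suc (j - 1) = j" using assms by auto
  then show ?thesis using assms by (simp add: xmap_def del: upt_Suc)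
qed

lemma xk_eq:
  "xk n m (lam, k) = (map (\<lambda>a. a + k * int m) (rotate (nat (k mod int n)) (fst (xmap n m lam))),
                      map (\<lambda>b. b + k * int m) (snd (xmap n m lam)))"
  by (simp add: xk_def Let_def fst_nu_pow snd_nu_pow length_xmap)

lemma length_xk: "length (fst (xk n m p)) = n" "length (snd (xk n m p)) = m"
  by (cases p; simp add: xk_eq length_xmap)+

lemma fst_xk_nth:
  assumes "0 < n" "i \<in> {1..n}"
  shows "fst (xk n m (lam, k)) ! (i - 1) = int m * (int (row_index n k i) - 1)
           + int n * int (part_at lam (row_index n k i)) + k * int m"
proof -
  define q where "q = (nat (k mod int n) + (i - 1)) mod n"
  have q: "q < n" and i1: "i - 1 < n" using assms by (auto simp: q_def)
  have "int q = (int i + k - 1) mod int n"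
    using assms by (simp add: q_def zmod_int)
      (metis add.commute add_diff_eq mod_add_right_eq)
  then have r: "row_index n k i = n - q" by (simp add: row_index_def)
  have "fst (xk n m (lam, k)) ! (i - 1) = fst (xmap n m lam) ! q + k * int m"
    using i1 by (simp add: xk_eq nth_rotate length_xmap q_def)
  also have "\<dots> = int (m * (n - Suc q) + n * part_at lam (n - q)) + k * int m"
    using q by (simp add: fst_xmap_nth)
  finally show ?thesis using q by (simp add: r)
qed

lemma snd_xk_nth:
  assumes "j \<in> {1..m}"
  shows "snd (xk n m (lam, k)) ! (j - 1) = int n * (int j - 1) + int m * int (conj_at lam j) + k * int m"
proof -
  have "j - 1 < m" using assms by auto
  then show ?thesis using snd_xmap_nth[OF assms] by (simp add: xk_eq length_xmap)
qed

lemma xk_zero: "xk n m (lam, 0) = xmap n m lam"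
  by (simp add: xk_eq prod_eq_iff)

lemma xk_pbar:
  assumes "lam \<in> partX n m" "0 < n" "part_at lam 1 = m"
  shows "xk n m (pbar lam, k + 1) = xk n m (lam, k)"
proof (rule wt_eqI[OF length_xk(1) length_xk(1) length_xk(2) length_xk(2)])
  have len: "length lam = n" using partX_length[OF assms(1)] .
  fix i assume i: "i \<in> {1..n}"
  define r where "r = row_index n k i"
  have r: "r \<in> {1..n}" using row_index_mem[OF assms(2)] by (simp add: r_def)
  have succ: "row_index n (k + 1) i = (if 2 \<le> r then r - 1 else n)"
    using row_index_succ[OF assms(2)] by (simp add: r_def)
  show "fst (xk n m (pbar lam, k + 1)) ! (i - 1) = fst (xk n m (lam, k)) ! (i - 1)"
  proof (cases "2 \<le> r")
    case True
    then have "r - 1 \<in> {1..n}" "r - 1 < n" "r - 1 + 1 = r" using r by auto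
    then have "part_at (pbar lam) (r - 1) = part_at lam r"
      using part_at_pbar[OF len, of "r - 1"] by presburger
    then show ?thesis using True succ
      unfolding fst_xk_nth[OF assms(2) i] by (simp add: r_def[symmetric] algebra_simps)
  next
    case False
    then have "r = 1" using r by simp
    moreover have "part_at (pbar lam) n = 0" using part_at_pbar[OF len, of n] assms(2) by simp
    ultimately show ?thesis using succ assms(3)
      unfolding fst_xk_nth[OF assms(2) i] by (simp add: r_def[symmetric] algebra_simps)
  qed
next
  fix j assume j: "j \<in> {1..m}"
  show "snd (xk n m (pbar lam, k + 1)) ! (j - 1) = snd (xk n m (lam, k)) ! (j - 1)"
    using conj_at_pbar[OF assms j] unfolding snd_xk_nth[OF j] by (simp add: algebra_simps)
qed

lemma tau_pos_xk:
  assumes "length lam = n" "0 < n" "i \<in> {1..n}" "j \<in> {1..m}"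
    and "part_at lam (row_index n k i) + 1 = j"
  shows "tau_pos n m i j (xk n m (lam, k)) = xk n m (lam[row_index n k i - 1 := j], k)"
proof -
  define r where "r = row_index n k i"
  have r: "r \<in> {1..n}" using row_index_mem[OF assms(2)] by (simp add: r_def)
  show ?thesis unfolding r_def[symmetric]
  proof (rule wt_eqI)
    show "length (fst (tau_pos n m i j (xk n m (lam, k)))) = n"
      "length (snd (tau_pos n m i j (xk n m (lam, k)))) = m"
      "length (fst (xk n m (lam[r - 1 := j], k))) = n"
      "length (snd (xk n m (lam[r - 1 := j], k))) = m"
      by (simp_all add: length_tau_pos length_xk)
  next
    fix i' assume i': "i' \<in> {1..n}"
    define r' where "r' = row_index n k i'"
    have r': "r' \<in> {1..n}" using row_index_mem[OF assms(2)] by (simp add: r'_def)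
    have "r' = r \<longleftrightarrow> i' = i"
      using inj_on_row_index[OF assms(2)] i' assms(3) unfolding r_def r'_def by (metis inj_onD)
    then have "int (part_at (lam[r - 1 := j]) r') = int (part_at lam r') + (if i' = i then 1 else 0)"
      using part_at_list_update[OF assms(1) r r'] assms(5)
      by (cases "i' = i") (simp_all add: r_def r'_def)
    then show "fst (tau_pos n m i j (xk n m (lam, k))) ! (i' - 1)
        = fst (xk n m (lam[r - 1 := j], k)) ! (i' - 1)"
      unfolding fst_tau_pos_nth[OF length_xk(1) assms(3) i'] fst_xk_nth[OF assms(2) i']
      by (simp add: r_def[symmetric] r'_def[symmetric] algebra_simps)
  next
    fix j' assume j': "j' \<in> {1..m}"
    have "lam[r - 1 := j] = lam[r - 1 := Suc (part_at lam r)]" using assms(5) by (simp add: r_def)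
    then have "int (conj_at (lam[r - 1 := j]) j') = int (conj_at lam j') + (if j' = j then 1 else 0)"
      using conj_at_add_box[OF assms(1) r, of j'] assms(5) by (simp add: r_def)
    then show "snd (tau_pos n m i j (xk n m (lam, k))) ! (j' - 1)
        = snd (xk n m (lam[r - 1 := j], k)) ! (j' - 1)"
      unfolding snd_tau_pos_nth[OF length_xk(2) assms(4) j'] snd_xk_nth[OF j']
      by (simp add: algebra_simps)
  qed
qed

lemma tau_neg_xk:
  assumes "length lam = n" "0 < n" "i \<in> {1..n}" "j \<in> {1..m}"
    and "part_at lam (row_index n k i) = j"
  shows "tau_neg n m i j (xk n m (lam, k)) = xk n m (lam[row_index n k i - 1 := j - 1], k)"
proof -
  define r where "r = row_index n k i"
  have r: "r \<in> {1..n}" using row_index_mem[OF assms(2)] by (simp add: r_def)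
  define mu where "mu = lam[r - 1 := j - 1]"
  have "part_at mu r + 1 = j"
    using part_at_list_update[OF assms(1) r r] assms(4) by (simp add: mu_def)
  then have "tau_pos n m i j (xk n m (mu, k)) = xk n m (mu[r - 1 := j], k)"
    using tau_pos_xk[of mu n i j m k] assms(1-4) by (simp add: mu_def r_def)
  also have "mu[r - 1 := j] = lam"
    using assms(5) list_update_id[of lam "r - 1"] by (simp add: mu_def r_def part_at_def)
  finally show ?thesis
    using tau_neg_tau_pos[of i "xk n m (mu, k)" j n m] assms(3,4)
    by (simp add: length_xk mu_def r_def)
qed

lemma Pi_pos_xk_iff:
  assumes "0 < n" "i \<in> {1..n}" "j \<in> {1..m}"
  shows "Pi_pos i j (xk n m (lam, k)) \<longleftrightarrow>
    int m * (int (row_index n k i) - 1 - int (conj_at lam j))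
      = int n * (int j - 1 - int (part_at lam (row_index n k i)))"
  unfolding Pi_pos_def fst_xk_nth[OF assms(1,2)] snd_xk_nth[OF assms(3)] by (simp add: algebra_simps)

lemma Pi_neg_xk_iff:
  assumes "0 < n" "i \<in> {1..n}" "j \<in> {1..m}"
  shows "Pi_neg n m i j (xk n m (lam, k)) \<longleftrightarrow>
    int m * (int (conj_at lam j) - int (row_index n k i))
      = int n * (int (part_at lam (row_index n k i)) - int j)"
  unfolding Pi_neg_def fst_xk_nth[OF assms(1,2)] snd_xk_nth[OF assms(3)]
  by (auto simp: algebra_simps)

section \<open>The orbit is the image of \<open>x\<close>\<close>

lemma coprime_mult_eq_cases:
  fixes d e :: int
  assumes "coprime m n" "0 < n" "int m * d = int n * e" "- int n \<le> d" "d < int n"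
  shows "d = 0 \<and> e = 0 \<or> d = - int n \<and> e = - int m"
proof -
  have "int n dvd int m * d" using assms(3) by simp
  then have "int n dvd d" using assms(1) by (simp add: coprime_commute coprime_dvd_mult_right_iff)
  then obtain c where d: "d = int n * c" by (elim dvdE)
  then have e: "e = int m * c" using assms(2,3) by (simp add: algebra_simps)
  have "int n * - 1 \<le> int n * c" "int n * c < int n * 1" using assms(4,5) d by simp_all
  then have "c = 0 \<or> c = - 1"
    using assms(2) by (simp only: mult_le_cancel_left_pos mult_less_cancel_left_pos of_nat_0_less_iff)
      linarith
  then show ?thesis using d e by auto
qed

text \<open>In the second case \<open>(n,1)\<close> is an addable box of \<open>pbar \<lambda>\<close>, and
  \<open>x(pbar \<lambda>,k+1) = x(\<lambda>,k)\<close>.\<close>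

lemma Pi_pos_xk_cases:
  assumes "lam \<in> partX n m" "0 < n" "coprime m n" "i \<in> {1..n}" "j \<in> {1..m}"
    and "Pi_pos i j (xk n m (lam, k))"
  obtains "part_at lam (row_index n k i) + 1 = j" "conj_at lam j + 1 = row_index n k i"
    | "row_index n k i = 1" "j = 1" "part_at lam 1 = m" "conj_at lam 1 = n"
proof -
  define r where "r = row_index n k i"
  have r: "r \<in> {1..n}" using row_index_mem[OF assms(2)] by (simp add: r_def)
  have bounds: "conj_at lam j \<le> n" "part_at lam r \<le> m"
    using conj_at_le[OF assms(1)] partX_le[OF assms(1) r] by auto
  have eq: "int m * (int r - 1 - int (conj_at lam j)) = int n * (int j - 1 - int (part_at lam r))"
    using assms(6) Pi_pos_xk_iff[OF assms(2,4,5)] by (simp add: r_def)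
  have "- int n \<le> int r - 1 - int (conj_at lam j)" "int r - 1 - int (conj_at lam j) < int n"
    using r bounds by auto
  then have "int r - 1 - int (conj_at lam j) = 0 \<and> int j - 1 - int (part_at lam r) = 0
      \<or> int r - 1 - int (conj_at lam j) = - int n \<and> int j - 1 - int (part_at lam r) = - int m"
    by (rule coprime_mult_eq_cases[OF assms(3,2) eq])
  then show thesis
  proof
    assume "int r - 1 - int (conj_at lam j) = 0 \<and> int j - 1 - int (part_at lam r) = 0"
    then show thesis using that(1) by (simp add: r_def)
  next
    assume "int r - 1 - int (conj_at lam j) = - int n \<and> int j - 1 - int (part_at lam r) = - int m"
    then have "r = 1" "conj_at lam j = n" "j = 1" "part_at lam r = m"
      using r assms(5) bounds by auto
    then show thesis using that(2) by (simp add: r_def)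
  qed
qed

text \<open>In the second case \<open>(1,m)\<close> is a removable box of \<open>\<mu> = (m,\<lambda>\<^sub>1,\<dots>,\<lambda>\<^sub>n\<^sub>-\<^sub>1)\<close>, and
  \<open>x(\<mu>,k-1) = x(\<lambda>,k)\<close>.\<close>

lemma Pi_neg_xk_cases:
  assumes "lam \<in> partX n m" "0 < n" "coprime m n" "i \<in> {1..n}" "j \<in> {1..m}"
    and "Pi_neg n m i j (xk n m (lam, k))"
  obtains "part_at lam (row_index n k i) = j" "conj_at lam j = row_index n k i"
    | "row_index n k i = n" "j = m" "part_at lam n = 0" "conj_at lam m = 0"
proof -
  define r where "r = row_index n k i"
  have r: "r \<in> {1..n}" using row_index_mem[OF assms(2)] by (simp add: r_def)
  have bounds: "conj_at lam j \<le> n" "part_at lam r \<le> m"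
    using conj_at_le[OF assms(1)] partX_le[OF assms(1) r] by auto
  have eq: "int m * (int (conj_at lam j) - int r) = int n * (int (part_at lam r) - int j)"
    using assms(6) Pi_neg_xk_iff[OF assms(2,4,5)] by (simp add: r_def)
  have "- int n \<le> int (conj_at lam j) - int r" "int (conj_at lam j) - int r < int n"
    using r bounds by auto
  then have "int (conj_at lam j) - int r = 0 \<and> int (part_at lam r) - int j = 0
      \<or> int (conj_at lam j) - int r = - int n \<and> int (part_at lam r) - int j = - int m"
    by (rule coprime_mult_eq_cases[OF assms(3,2) eq])
  then show thesis
  proof
    assume "int (conj_at lam j) - int r = 0 \<and> int (part_at lam r) - int j = 0"
    then show thesis using that(1) by (simp add: r_def)
  next
    assume "int (conj_at lam j) - int r = - int n \<and> int (part_at lam r) - int j = - int m"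
    then have "r = n" "conj_at lam j = 0" "j = m" "part_at lam r = 0"
      using r assms(5) bounds by auto
    then show thesis using that(2) by (simp add: r_def)
  qed
qed

lemma tau_pos_xk_in_image:
  assumes "lam \<in> partX n m" "0 < n" "coprime m n" "i \<in> {1..n}" "j \<in> {1..m}"
    and "Pi_pos i j (xk n m (lam, k))"
  shows "tau_pos n m i j (xk n m (lam, k)) \<in> xk n m ` (partX n m \<times> UNIV)"
  using assms
proof (cases rule: Pi_pos_xk_cases)
  case 1
  then have "lam[row_index n k i - 1 := j] \<in> partX n m"
    using add_box_partX[OF assms(1) row_index_mem[OF assms(2)]] assms(5) by simp
  then show ?thesis
    using tau_pos_xk[OF partX_length[OF assms(1)] assms(2,4,5) 1(1)] by auto
next
  case 2
  let ?mu = "pbar lam"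
  have mu: "?mu \<in> partX n m" using pbar_partX[OF assms(1,2)] .
  have row: "row_index n (k + 1) i = n" using row_index_succ[OF assms(2), of k i] 2(1) by simp
  have "part_at ?mu n = 0" using part_at_pbar[OF partX_length[OF assms(1)], of n] assms(2) by simp
  moreover have "conj_at ?mu 1 + 1 = n"
    using conj_at_pbar[OF assms(1,2) 2(3), of 1] 2(4) assms(5) by simp
  ultimately have "?mu[n - 1 := 1] \<in> partX n m"
    using add_box_partX[OF mu, of n 1] assms(2,5) by simp
  moreover have "tau_pos n m i j (xk n m (lam, k)) = xk n m (?mu[n - 1 := 1], k + 1)"
    using tau_pos_xk[OF partX_length[OF mu] assms(2,4,5), of "k + 1"] xk_pbar[OF assms(1,2) 2(3)]
      row 2(2) \<open>part_at ?mu n = 0\<close> by simp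
  ultimately show ?thesis by auto
qed

lemma tau_neg_xk_in_image:
  assumes "lam \<in> partX n m" "0 < n" "coprime m n" "i \<in> {1..n}" "j \<in> {1..m}"
    and "Pi_neg n m i j (xk n m (lam, k))"
  shows "tau_neg n m i j (xk n m (lam, k)) \<in> xk n m ` (partX n m \<times> UNIV)"
  using assms
proof (cases rule: Pi_neg_xk_cases)
  case 1
  have "lam[row_index n k i - 1 := j - 1] \<in> partX n m"
    using remove_box_partX[OF assms(1) row_index_mem[OF assms(2)] 1] .
  then show ?thesis
    using tau_neg_xk[OF partX_length[OF assms(1)] assms(2,4,5) 1(1)] by auto
next
  case 2
  let ?mu = "m # butlast lam"
  have mu: "?mu \<in> partX n m" using cons_butlast_partX[OF assms(1,2)] .
  have pbar_mu: "pbar ?mu = lam" using pbar_cons_butlast[OF partX_length[OF assms(1)] assms(2) 2(3)] .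
  have mu1: "part_at ?mu 1 = m" by (simp add: part_at_def)
  have "row_index n (k - 1 + 1) i = n" using 2(1) by simp
  then have row: "row_index n (k - 1) i = 1"
    using row_index_succ[OF assms(2), of "k - 1" i] row_index_mem[OF assms(2), of "k - 1" i]
    by (auto split: if_splits)
  have "conj_at ?mu m = 1"
    using conj_at_pbar[OF mu assms(2) mu1, of m] 2(4) assms(5) pbar_mu by simp
  then have "?mu[1 - 1 := m - 1] \<in> partX n m"
    using remove_box_partX[OF mu, of 1 m] assms(2) mu1 by simp
  moreover have "tau_neg n m i j (xk n m (lam, k)) = xk n m (?mu[1 - 1 := m - 1], k - 1)"
    using tau_neg_xk[OF partX_length[OF mu] assms(2,4,5), of "k - 1"] xk_pbar[OF mu assms(2) mu1, of "k - 1"]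
      row 2(2) mu1 pbar_mu by simp
  ultimately show ?thesis by auto
qed

lemma orbit_subset_xk_image:
  assumes "0 < n" "coprime m n"
  shows "orbit n m \<subseteq> xk n m ` (partX n m \<times> UNIV)"
proof
  fix L assume "L \<in> orbit n m"
  then show "L \<in> xk n m ` (partX n m \<times> UNIV)"
  proof (induction rule: orbit.induct)
    case base
    show ?case using empty_partX xk_zero by (metis Lambda0_def image_eqI mem_Sigma_iff UNIV_I)
  next
    case (pos L i j)
    then show ?case using tau_pos_xk_in_image[OF _ assms(1,2)] by blast
  next
    case (neg L i j)
    then show ?case using tau_neg_xk_in_image[OF _ assms(1,2)] by blast
  qed
qed

lemma xk_remove_box_in_orbit_iff:
  assumes "lam \<in> partX n m" "0 < n" "r \<in> {1..n}" "part_at lam r = c" "conj_at lam c = r" "1 \<le> c"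
  shows "xk n m (lam[r - 1 := c - 1], k) \<in> orbit n m \<longleftrightarrow> xk n m (lam, k) \<in> orbit n m"
proof -
  obtain i where i: "i \<in> {1..n}" "row_index n k i = r"
    using row_index_image[OF assms(2), of k] assms(3) by (metis imageE)
  have c: "c \<in> {1..m}" using partX_le[OF assms(1,3)] assms(4,6) by simp
  have "Pi_neg n m i c (xk n m (lam, k))"
    using Pi_neg_xk_iff[OF assms(2) i(1) c] i(2) assms(4,5) by simp
  moreover have "tau_neg n m i c (xk n m (lam, k)) = xk n m (lam[r - 1 := c - 1], k)"
    using tau_neg_xk[OF partX_length[OF assms(1)] assms(2) i(1) c] i(2) assms(4) by simp
  ultimately show ?thesis
    using orbit_tau_neg_iff[OF length_xk i(1) c] by metis
qed

lemma xk_in_orbit_iff_empty: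
  assumes "lam \<in> partX n m" "0 < n"
  shows "xk n m (lam, k) \<in> orbit n m \<longleftrightarrow> xk n m (replicate n 0, k) \<in> orbit n m"
  using assms(1)
proof (induction "sum_list lam" arbitrary: lam rule: less_induct)
  case less
  show ?case
  proof (cases "lam = replicate n 0")
    case False
    define c where "c = part_at lam 1"
    define r where "r = conj_at lam c"
    have c: "1 \<le> c" using first_row_pos[OF less.prems False] by (simp add: c_def)
    have r: "r \<in> {1..n}" and "part_at lam r = c"
      using last_box_of_first_row[OF less.prems assms(2)] by (simp_all add: r_def c_def)
    define mu where "mu = lam[r - 1 := c - 1]"
    have mu: "mu \<in> partX n m"
      using remove_box_partX[OF less.prems r \<open>part_at lam r = c\<close>] by (simp add: mu_def r_def)
    have "r - 1 < length lam" "lam ! (r - 1) = c"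
      using r partX_length[OF less.prems] \<open>part_at lam r = c\<close> by (auto simp: part_at_def)
    then have "sum_list mu < sum_list lam"
      using sum_list_update[of "r - 1" lam "c - 1"] elem_le_sum_list[of "r - 1" lam] c
      by (simp add: mu_def)
    then have "xk n m (mu, k) \<in> orbit n m \<longleftrightarrow> xk n m (replicate n 0, k) \<in> orbit n m"
      using less.hyps mu by blast
    then show ?thesis
      using xk_remove_box_in_orbit_iff[OF less.prems assms(2) r \<open>part_at lam r = c\<close> _ c]
      by (simp add: mu_def r_def)
  qed simp
qed

lemma xk_empty_in_orbit:
  assumes "0 < n"
  shows "xk n m (replicate n 0, k) \<in> orbit n m"
proof (induction k rule: int_induct[where k = 0])
  case base
  show ?case using orbit.base by (simp add: xk_zero Lambda0_def)
next
  case (step1 k)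
  define lam where "lam = m # replicate (n - 1) 0"
  have lam: "lam \<in> partX n m" using assms by (simp add: lam_def partX_def sorted_wrt_iff_nth_less)
  have "pbar lam = replicate n 0"
    using assms by (simp add: lam_def pbar_def) (metis Suc_pred replicate_Suc replicate_append_same)
  moreover have "part_at lam 1 = m" by (simp add: lam_def part_at_def)
  ultimately show ?case
    using xk_pbar[OF lam assms] xk_in_orbit_iff_empty[OF lam assms] step1 by simp
next
  case (step2 k)
  define lam where "lam = replicate n m"
  have lam: "lam \<in> partX n m" by (simp add: lam_def partX_def sorted_wrt_iff_nth_less)
  have "part_at lam 1 = m" using assms by (simp add: lam_def part_at_def)
  then have "xk n m (lam, k - 1) = xk n m (pbar lam, k)"
    using xk_pbar[OF lam assms, of "k - 1"] by simp
  also have "\<dots> \<in> orbit n m"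
    using xk_in_orbit_iff_empty[OF pbar_partX[OF lam assms] assms] step2 by simp
  finally show ?case
    using xk_in_orbit_iff_empty[OF lam assms] by simp
qed

lemma xk_image_subset_orbit:
  assumes "0 < n"
  shows "xk n m ` (partX n m \<times> UNIV) \<subseteq> orbit n m"
  using xk_in_orbit_iff_empty[OF _ assms] xk_empty_in_orbit[OF assms] by auto

section \<open>Injectivity modulo \<open>\<sim>\<close>\<close>

lemma xk_inj_same_level:
  assumes "length lam = n" "length mu = n" "0 < n" "xk n m (lam, k) = xk n m (mu, k)"
  shows "lam = mu"
proof (rule nth_equalityI)
  show "length lam = length mu" using assms(1,2) by simp
  fix p assume "p < length lam"
  then have "Suc p \<in> {1..n}" using assms(1) by simp
  then obtain i where i: "i \<in> {1..n}" "row_index n k i = Suc p"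
    using row_index_image[OF assms(3), of k] by (metis imageE)
  have "fst (xk n m (lam, k)) ! (i - 1) = fst (xk n m (mu, k)) ! (i - 1)" using assms(4) by simp
  then show "lam ! p = mu ! p"
    unfolding fst_xk_nth[OF assms(3) i(1)] i(2) using assms(3) by (simp add: part_at_def)
qed

lemma xk_eq_higher_level_first_row:
  assumes "lam \<in> partX n m" "0 < n" "0 < m" "xk n m (lam, k) = xk n m (mu, l)" "k < l"
  shows "part_at lam 1 = m"
proof -
  have m: "m \<in> {1..m}" using assms(3) by simp
  have "snd (xk n m (lam, k)) ! (m - 1) = snd (xk n m (mu, l)) ! (m - 1)" using assms(4) by simp
  then have "int m * (int (conj_at lam m) + k) = int m * (int (conj_at mu m) + l)"
    unfolding snd_xk_nth[OF m] by (simp add: algebra_simps)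
  then have "1 \<le> conj_at lam m" using assms(3,5) by simp
  then have "m \<le> part_at lam 1" using le_part_at_iff_le_conj_at[OF assms(1), of 1 m] assms(2) by simp
  then show ?thesis using partX_le[OF assms(1), of 1] assms(2) by simp
qed

lemma xk_eq_imp_simX_le:
  assumes "lam \<in> partX n m" "mu \<in> partX n m" "0 < n" "0 < m"
    and "xk n m (lam, k) = xk n m (mu, l)" "k \<le> l"
  shows "simX n m (lam, k) (mu, l)"
  using assms(1,5,6)
proof (induction "nat (l - k)" arbitrary: lam k)
  case 0
  then have "lam = mu"
    using xk_inj_same_level[OF partX_length partX_length assms(3)] assms(2) by simp
  then show ?case using 0 by (simp add: simX_def)
next
  case (Suc d)
  have first_row: "part_at lam 1 = m"
    using xk_eq_higher_level_first_row[OF Suc.prems(1) assms(3,4) Suc.prems(2)] Suc.hyps(2) by simp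
  then have "gen_rel n m (lam, k) (pbar lam, k + 1)" using Suc.prems(1) by (simp add: gen_rel_def)
  moreover have "simX n m (pbar lam, k + 1) (mu, l)"
    using Suc.hyps(1)[of "k + 1" "pbar lam"] Suc.hyps(2) Suc.prems
      pbar_partX[OF Suc.prems(1) assms(3)] xk_pbar[OF Suc.prems(1) assms(3) first_row] by simp
  ultimately show ?case unfolding simX_def by (rule equivclp_trans[OF r_into_equivclp])
qed

lemma xk_eq_imp_simX:
  assumes "lam \<in> partX n m" "mu \<in> partX n m" "0 < n" "0 < m"
    and "xk n m (lam, k) = xk n m (mu, l)"
  shows "simX n m (lam, k) (mu, l)"
proof (cases "k \<le> l")
  case False
  then have "simX n m (mu, l) (lam, k)"
    using xk_eq_imp_simX_le[OF assms(2,1,3,4) assms(5)[symmetric]] by simp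
  then show ?thesis unfolding simX_def by (rule equivclp_sym)
qed (rule xk_eq_imp_simX_le[OF assms])

theorem theorem4p14:
  fixes n m :: nat
  assumes "0 < n" and "n < m" and "coprime m n"
  shows "(\<forall>lam\<in>partX n m. \<forall>k::int. part_at lam 1 = m \<longrightarrow>
            xk n m (pbar lam, k + 1) = xk n m (lam, k))
       \<and> (\<forall>p\<in>partX n m \<times> UNIV. \<forall>q\<in>partX n m \<times> UNIV. xk n m p = xk n m q \<longrightarrow> simX n m p q)
       \<and> xk n m ` (partX n m \<times> UNIV) = orbit n m"
proof (intro conjI)
  show "\<forall>lam\<in>partX n m. \<forall>k::int. part_at lam 1 = m \<longrightarrow>
      xk n m (pbar lam, k + 1) = xk n m (lam, k)"
    using xk_pbar[OF _ assms(1)] by blast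
  show "\<forall>p\<in>partX n m \<times> UNIV. \<forall>q\<in>partX n m \<times> UNIV. xk n m p = xk n m q \<longrightarrow> simX n m p q"
    using xk_eq_imp_simX[OF _ _ assms(1)] assms(2) by fastforce
  show "xk n m ` (partX n m \<times> UNIV) = orbit n m"
    using xk_image_subset_orbit[OF assms(1)] orbit_subset_xk_image[OF assms(1,3)]
    by (rule subset_antisym)
qed

end
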